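(* Let $G$ be an antimatroid on a ground set $S$ with $|S|=n$, and write its Tutte polynomial as $T(G;x,y)=\sum_{i,j}b_{i,j}x^iy^j$. For $i,j\ge0$ let $a_{i,j}$ be the number of convex sets $C$ of $G$ with $|C|=i$ and $|\mathrm{int}(C)|=j$. Then $$b_{i,j}=\sum_{s=i}^{n}(-1)^{s-i}\binom{s}{i}a_{s,j}.$$
   Context: An antimatroid on a finite set $S$ is a family $\mathcal{F}\subseteq 2^S$ of feasible sets with $\emptyset\in\mathcal{F}$, $S\in\mathcal{F}$, $F_1\cup F_2\in\mathcal{F}$ whenever $F_1,F_2\in\mathcal{F}$, and accessible: every nonempty $F\in\mathcal{F}$ contains some $x$ with $F\setminus\{x\}\in\mathcal{F}$. Its rank function is $r(A)=\max\{|F|:F\in\mathcal{F},F\subseteq A\}$ (so $r(S)=|S|$), and its Tutte polynomial is $T(G;x,y)=\sum_{A\subseteq S}(x-1)^{r(S)-r(A)}(y-1)^{|A|-r(A)}$. A set $C$ is convex if $S\setminus C\in\mathcal{F}$; convex sets are closed under intersection, and the convex closure $\overline{A}$ of $A$ is the smallest convex set containing $A$. For convex $C$, $p\in C$ is extreme if $p\notin\overline{C\setminus\{p\}}$; $\mathrm{int}(C)$ is the set of non-extreme points of $C$. *)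

theory Defs
  imports "HOL-Computational_Algebra.Polynomial"
begin

definition antimatroid :: "'a set \<Rightarrow> 'a set set \<Rightarrow> bool" where
  "antimatroid S \<F> \<longleftrightarrow> finite S \<and> \<F> \<subseteq> Pow S \<and> {} \<in> \<F> \<and> S \<in> \<F> \<and>
     (\<forall>F1\<in>\<F>. \<forall>F2\<in>\<F>. F1 \<union> F2 \<in> \<F>) \<and>
     (\<forall>F\<in>\<F>. F \<noteq> {} \<longrightarrow> (\<exists>x\<in>F. F - {x} \<in> \<F>))"

definition am_rank :: "'a set set \<Rightarrow> 'a set \<Rightarrow> nat" where
  "am_rank \<F> A = Max {card F | F. F \<in> \<F> \<and> F \<subseteq> A}"

text \<open>Tutte polynomial as a bivariate integer polynomial: an outer polynomial in x
  whose coefficients are polynomials in y.\<close>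
definition tutte_X :: "int poly poly" where "tutte_X = monom 1 1"
definition tutte_Y :: "int poly poly" where "tutte_Y = [: [:0, 1:] :]"

definition tutte_poly :: "'a set \<Rightarrow> 'a set set \<Rightarrow> int poly poly" where
  "tutte_poly S \<F> = (\<Sum>A\<in>Pow S. (tutte_X - 1) ^ (am_rank \<F> S - am_rank \<F> A)
                                   * (tutte_Y - 1) ^ (card A - am_rank \<F> A))"

definition tutte_coeff :: "'a set \<Rightarrow> 'a set set \<Rightarrow> nat \<Rightarrow> nat \<Rightarrow> int" where
  "tutte_coeff S \<F> i j = coeff (coeff (tutte_poly S \<F>) i) j"

definition convex :: "'a set \<Rightarrow> 'a set set \<Rightarrow> 'a set \<Rightarrow> bool" where
  "convex S \<F> C \<longleftrightarrow> C \<subseteq> S \<and> S - C \<in> \<F>"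

definition conv_closure :: "'a set \<Rightarrow> 'a set set \<Rightarrow> 'a set \<Rightarrow> 'a set" where
  "conv_closure S \<F> A = \<Inter>{D. convex S \<F> D \<and> A \<subseteq> D}"

definition extreme :: "'a set \<Rightarrow> 'a set set \<Rightarrow> 'a set \<Rightarrow> 'a \<Rightarrow> bool" where
  "extreme S \<F> C p \<longleftrightarrow> p \<in> C \<and> p \<notin> conv_closure S \<F> (C - {p})"

definition conv_int :: "'a set \<Rightarrow> 'a set set \<Rightarrow> 'a set \<Rightarrow> 'a set" where
  "conv_int S \<F> C = {p \<in> C. \<not> extreme S \<F> C p}"

definition count_convex :: "'a set \<Rightarrow> 'a set set \<Rightarrow> nat \<Rightarrow> nat \<Rightarrow> nat" where
  "count_convex S \<F> i j = card {C. convex S \<F> C \<and> card C = i \<and> card (conv_int S \<F> C) = j}"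

end

theory Submission
  imports Defs
begin

text \<open>
  Every set A has a largest feasible subset, its kernel, and am_rank A is the size of the kernel.
  Grouping the subsets A of S by their kernel F, the sets with kernel F are exactly the sets
  F \<union> B with B contained in the interior of the convex set S - F: a point x outside F
  can be added to F without leaving the kernel precisely when F \<union> {x} is not feasible,
  i.e. when x is not extreme in S - F. Summing (y - 1)^|B| over these B gives y^|int(S - F)|, so
  T(G;x,y) is the sum of (x - 1)^|C| y^|int C| over all convex sets C, and the coefficient of
  x^i y^j is read off by expanding (x - 1)^|C| binomially.
\<close>

context
  fixes S :: "'a set" and \<F> :: "'a set set"
  assumes am: "antimatroid S \<F>"
begin

lemma antimatroid_finite: "finite S"
  using am by (simp add: antimatroid_def)

lemma antimatroid_feasible_subset: "F \<in> \<F> \<Longrightarrow> F \<subseteq> S"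
  using am by (auto simp: antimatroid_def)

lemma antimatroid_finite_family: "finite \<F>"
  using am by (auto simp: antimatroid_def intro: finite_subset[of _ "Pow S"])

lemma antimatroid_Un: "F1 \<in> \<F> \<Longrightarrow> F2 \<in> \<F> \<Longrightarrow> F1 \<union> F2 \<in> \<F>"
  using am by (simp add: antimatroid_def)

lemma antimatroid_accessible: "F \<in> \<F> \<Longrightarrow> F \<noteq> {} \<Longrightarrow> \<exists>x\<in>F. F - {x} \<in> \<F>"
  using am by (simp add: antimatroid_def)

lemma antimatroid_Union:
  assumes "G \<subseteq> \<F>"
  shows "\<Union>G \<in> \<F>"
proof -
  have "finite G" using assms antimatroid_finite_family by (rule finite_subset)
  then show ?thesis
    using assms
    by induction (use am antimatroid_Un in \<open>auto simp: antimatroid_def\<close>)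
qed

lemma antimatroid_augment:
  assumes "F \<in> \<F>" "F' \<in> \<F>" "\<not> F' \<subseteq> F"
  shows "\<exists>x\<in>F' - F. insert x F \<in> \<F>"
  using assms(2,3)
proof (induction "card F'" arbitrary: F' rule: less_induct)
  case less
  obtain y where y: "y \<in> F'" "F' - {y} \<in> \<F>"
    using antimatroid_accessible less.prems by blast
  show ?case
  proof (cases "F' - {y} \<subseteq> F")
    case True
    then have "y \<notin> F" "insert y F = F \<union> F'"
      using less.prems y by auto
    then show ?thesis
      using y antimatroid_Un[OF assms(1) less.prems(1)] by (intro bexI[of _ y]) auto
  next
    case False
    have "finite F'"
      using antimatroid_feasible_subset[OF less.prems(1)] antimatroid_finite by (rule finite_subset)
    then have "card (F' - {y}) < card F'"
      using y by (meson card_Diff1_less)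
    from less.hyps[OF this y(2) False] show ?thesis by auto
  qed
qed

definition kernel :: "'a set \<Rightarrow> 'a set" where
  "kernel A = \<Union>{F\<in>\<F>. F \<subseteq> A}"

lemma kernel_feasible: "kernel A \<in> \<F>"
  unfolding kernel_def by (rule antimatroid_Union) auto

lemma kernel_subset: "kernel A \<subseteq> A"
  by (auto simp: kernel_def)

lemma kernel_greatest: "F \<in> \<F> \<Longrightarrow> F \<subseteq> A \<Longrightarrow> F \<subseteq> kernel A"
  by (auto simp: kernel_def)

lemma am_rank_eq_card_kernel: "am_rank \<F> A = card (kernel A)"
  unfolding am_rank_def
proof (rule Max_eqI)
  have "{card F |F. F \<in> \<F> \<and> F \<subseteq> A} = card ` {F\<in>\<F>. F \<subseteq> A}" by auto
  then show "finite {card F |F. F \<in> \<F> \<and> F \<subseteq> A}"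
    using antimatroid_finite_family by simp
  show "card (kernel A) \<in> {card F |F. F \<in> \<F> \<and> F \<subseteq> A}"
    using kernel_feasible kernel_subset by blast
  have "finite (kernel A)"
    using antimatroid_feasible_subset[OF kernel_feasible] antimatroid_finite by (rule finite_subset)
  then show "y \<le> card (kernel A)" if "y \<in> {card F |F. F \<in> \<F> \<and> F \<subseteq> A}" for y
    using that kernel_greatest by (auto intro: card_mono)
qed

lemma am_rank_ground: "am_rank \<F> S = card S"
proof -
  have "S \<in> \<F>"
    using am by (simp add: antimatroid_def)
  then have "kernel S = S"
    using kernel_subset kernel_greatest[of S S] by blast
  then show ?thesis by (simp add: am_rank_eq_card_kernel)
qed

lemma bij_betw_complement_convex: "bij_betw (\<lambda>F. S - F) \<F> {C. convex S \<F> C}"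
  by (rule bij_betw_byWitness[where f' = "\<lambda>C. S - C"])
     (use antimatroid_feasible_subset in \<open>auto simp: convex_def double_diff\<close>)

lemma extreme_complement_iff:
  assumes F: "F \<in> \<F>" and x: "x \<in> S - F"
  shows "extreme S \<F> (S - F) x \<longleftrightarrow> insert x F \<in> \<F>"
proof
  have compl: "S - (S - F - {x}) = insert x F"
    using antimatroid_feasible_subset[OF F] x by auto
  {
    assume "insert x F \<in> \<F>"
    then have "convex S \<F> (S - F - {x})"
      using compl by (auto simp: convex_def)
    then have "conv_closure S \<F> (S - F - {x}) \<subseteq> S - F - {x}"
      by (auto simp: conv_closure_def)
    then show "extreme S \<F> (S - F) x"
      using x by (auto simp: extreme_def)
  }
  assume "extreme S \<F> (S - F) x"
  then obtain D where D: "convex S \<F> D" "S - F - {x} \<subseteq> D" "x \<notin> D"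
    by (auto simp: extreme_def conv_closure_def)
  text \<open>Cutting D down to S - F gives the convex set S - F - {x}.\<close>
  have "S - (S - F - {x}) = (S - D) \<union> F"
    using D antimatroid_feasible_subset[OF F] by auto
  then show "insert x F \<in> \<F>"
    using compl D(1) antimatroid_Un[OF _ F] by (simp add: convex_def)
qed

lemma conv_int_complement:
  assumes "F \<in> \<F>"
  shows "conv_int S \<F> (S - F) = {x \<in> S - F. insert x F \<notin> \<F>}"
  using extreme_complement_iff[OF assms] by (auto simp: conv_int_def)

lemma kernel_fiber:
  assumes F: "F \<in> \<F>"
  shows "{A \<in> Pow S. kernel A = F} = (\<lambda>B. F \<union> B) ` Pow (conv_int S \<F> (S - F))"
proof -
  have "A \<subseteq> S \<and> kernel A = F \<longleftrightarrow> F \<subseteq> A \<and> A - F \<subseteq> conv_int S \<F> (S - F)" for A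
  proof
    assume A: "A \<subseteq> S \<and> kernel A = F"
    have "insert x F \<notin> \<F>" if "x \<in> A - F" for x
      using A that kernel_subset kernel_greatest[of "insert x F" A] by blast
    then show "F \<subseteq> A \<and> A - F \<subseteq> conv_int S \<F> (S - F)"
      using A kernel_subset conv_int_complement[OF F] by blast
  next
    assume A: "F \<subseteq> A \<and> A - F \<subseteq> conv_int S \<F> (S - F)"
    have "\<not> kernel A \<subseteq> F \<Longrightarrow> False"
      using antimatroid_augment[OF F kernel_feasible] A kernel_subset conv_int_complement[OF F]
      by blast
    then show "A \<subseteq> S \<and> kernel A = F"
      using A kernel_greatest[OF F] antimatroid_feasible_subset[OF F]
      by (auto simp: conv_int_def)
  qed
  then show ?thesis
    by (auto simp: image_def)
qed

end

lemma sum_power_card_Pow: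
  fixes a :: "'b::comm_semiring_1"
  assumes "finite I"
  shows "(\<Sum>B\<in>Pow I. a ^ card B) = (a + 1) ^ card I"
  using prod_add[OF assms, of "\<lambda>_. a" "\<lambda>_. 1"] by simp

lemma tutte_poly_eq_sum_convex:
  assumes am: "antimatroid S \<F>"
  shows "tutte_poly S \<F> =
    (\<Sum>C\<in>{C. convex S \<F> C}. (tutte_X - 1) ^ card C * tutte_Y ^ card (conv_int S \<F> C))"
proof -
  define g where "g A = (tutte_X - 1) ^ (card S - card (kernel \<F> A))
    * (tutte_Y - 1) ^ (card A - card (kernel \<F> A))" for A
  have fin: "finite S"
    using am by (rule antimatroid_finite)
  have fiber_sum: "(\<Sum>A\<in>{A \<in> Pow S. kernel \<F> A = F}. g A)
      = (tutte_X - 1) ^ card (S - F) * tutte_Y ^ card (conv_int S \<F> (S - F))"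
    if F: "F \<in> \<F>" for F
  proof -
    define I where "I = conv_int S \<F> (S - F)"
    have FS: "F \<subseteq> S"
      using am F by (rule antimatroid_feasible_subset)
    have IS: "I \<subseteq> S - F"
      by (auto simp: I_def conv_int_def)
    have finF: "finite F" and finI: "finite I"
      using FS IS fin by (auto intro: finite_subset)
    have "g (F \<union> B) = (tutte_X - 1) ^ card (S - F) * (tutte_Y - 1) ^ card B"
      if B: "B \<subseteq> I" for B
    proof -
      have "F \<union> B \<in> {A \<in> Pow S. kernel \<F> A = F}"
        using B by (subst kernel_fiber[OF am F]) (auto simp: I_def)
      then have "kernel \<F> (F \<union> B) = F"
        by simp
      moreover have "card (F \<union> B) = card F + card B"
        using B IS finF finI by (intro card_Un_disjoint) (auto intro: finite_subset)
      ultimately show ?thesis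
        using FS finF by (simp add: g_def card_Diff_subset)
    qed
    moreover have "inj_on (\<lambda>B. F \<union> B) (Pow I)"
      using IS by (auto simp: inj_on_def)
    ultimately have "(\<Sum>A\<in>{A \<in> Pow S. kernel \<F> A = F}. g A)
        = (\<Sum>B\<in>Pow I. (tutte_X - 1) ^ card (S - F) * (tutte_Y - 1) ^ card B)"
      unfolding kernel_fiber[OF am F] I_def[symmetric] by (simp add: sum.reindex)
    also have "\<dots> = (tutte_X - 1) ^ card (S - F) * tutte_Y ^ card I"
      by (simp add: sum_distrib_left[symmetric] sum_power_card_Pow[OF finI])
    finally show ?thesis
      unfolding I_def .
  qed
  have "tutte_poly S \<F> = (\<Sum>A\<in>Pow S. g A)"
    unfolding tutte_poly_def g_def am_rank_ground[OF am] by (simp add: am_rank_eq_card_kernel[OF am])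
  also have "\<dots> = (\<Sum>F\<in>\<F>. \<Sum>A\<in>{A \<in> Pow S. kernel \<F> A = F}. g A)"
    by (rule sum.group[symmetric])
       (use fin antimatroid_finite_family[OF am] kernel_feasible[OF am] in auto)
  also have "\<dots> = (\<Sum>F\<in>\<F>. (tutte_X - 1) ^ card (S - F) * tutte_Y ^ card (conv_int S \<F> (S - F)))"
    by (rule sum.cong[OF refl fiber_sum])
  also have "\<dots> = (\<Sum>C\<in>{C. convex S \<F> C}. (tutte_X - 1) ^ card C * tutte_Y ^ card (conv_int S \<F> C))"
    by (rule sum.reindex_bij_betw[OF bij_betw_complement_convex[OF am]])
  finally show ?thesis .
qed

lemma coeff_linear_poly_power_all:
  fixes a b :: "'b::comm_ring_1"
  shows "coeff ([:a, b:] ^ n) i = of_nat (n choose i) * b ^ i * a ^ (n - i)"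
proof (cases "i \<le> n")
  case True
  then show ?thesis by (rule coeff_linear_poly_power)
next
  case False
  have "degree ([:a, b:] ^ n) \<le> n"
    by (rule order.trans[OF degree_power_le]) auto
  then show ?thesis
    using False by (simp add: coeff_eq_0 binomial_eq_0)
qed

lemma coeff_coeff_tutte_monomial:
  "coeff (coeff ((tutte_X - 1) ^ c * tutte_Y ^ k) i) j
     = (if k = j then (-1) ^ (c - i) * int (c choose i) else 0)"
proof -
  have X: "tutte_X - 1 = [:-1, 1:]"
    by (simp add: tutte_X_def poly_eq_iff coeff_monom coeff_pCons split: nat.split)
  have Y: "tutte_Y ^ k = [:monom 1 k:]"
    by (simp add: tutte_Y_def poly_const_pow monom_altdef)
  have "coeff ((tutte_X - 1) ^ c * tutte_Y ^ k) i = coeff ([:-1, 1:] ^ c) i * monom 1 k"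
    unfolding X Y by (simp add: mult.commute[of _ "[:_:]"])
  also have "\<dots> = monom ((-1) ^ (c - i) * int (c choose i)) k"
    unfolding coeff_linear_poly_power_all
    by (cases "even (c - i)") (simp_all add: smult_monom of_nat_poly)
  finally show ?thesis by simp
qed

lemma sum_card_group:
  fixes f :: "nat \<Rightarrow> 'b::comm_semiring_1"
  assumes "finite K" "\<And>C. C \<in> K \<Longrightarrow> card C \<le> n"
  shows "(\<Sum>C\<in>K. f (card C)) = (\<Sum>s\<le>n. of_nat (card {C\<in>K. card C = s}) * f s)"
proof -
  have "(\<Sum>C\<in>K. f (card C)) = (\<Sum>s\<le>n. \<Sum>C\<in>{C\<in>K. card C = s}. f (card C))"
    by (rule sum.group[symmetric]) (use assms in auto)
  also have "\<dots> = (\<Sum>s\<le>n. of_nat (card {C\<in>K. card C = s}) * f s)"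
    by (simp add: mult.commute)
  finally show ?thesis .
qed

theorem lemma4p3:
  fixes S :: "'a set" and \<F> :: "'a set set" and i j :: nat
  assumes "antimatroid S \<F>"
  shows "tutte_coeff S \<F> i j =
    (\<Sum>s=i..card S. (-1) ^ (s - i) * int (s choose i) * int (count_convex S \<F> s j))"
proof -
  define K where "K = {C. convex S \<F> C \<and> card (conv_int S \<F> C) = j}"
  define f where "f s = (-1) ^ (s - i) * int (s choose i)" for s
  have fin: "finite {C. convex S \<F> C}"
    using bij_betw_finite[OF bij_betw_complement_convex] antimatroid_finite_family assms by blast
  have card_le: "card C \<le> card S" if "C \<in> K" for C
    using that antimatroid_finite[OF assms] by (auto simp: K_def convex_def card_mono)
  have "tutte_coeff S \<F> i j
      = (\<Sum>C\<in>{C. convex S \<F> C}. if card (conv_int S \<F> C) = j then f (card C) else 0)"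
    unfolding f_def
    by (simp add: tutte_coeff_def tutte_poly_eq_sum_convex[OF assms] coeff_sum
        coeff_coeff_tutte_monomial eq_commute[of j])
  also have "\<dots> = (\<Sum>C\<in>K. f (card C))"
    unfolding K_def using sum.inter_filter[OF fin, symmetric] by simp
  also have "\<dots> = (\<Sum>s\<le>card S. of_nat (count_convex S \<F> s j) * f s)"
  proof -
    have "finite K"
      using fin by (auto simp: K_def intro: finite_subset)
    moreover have "{C\<in>K. card C = s} = {C. convex S \<F> C \<and> card C = s \<and> card (conv_int S \<F> C) = j}"
      for s by (auto simp: K_def)
    ultimately show ?thesis
      by (simp add: sum_card_group[OF _ card_le] count_convex_def)
  qed
  also have "\<dots> = (\<Sum>s=i..card S. of_nat (count_convex S \<F> s j) * f s)"
    by (rule sum.mono_neutral_right) (auto simp: f_def binomial_eq_0)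
  finally show ?thesis
    by (simp add: f_def mult.commute)
qed

end
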